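(* For positive integers $x_1,\ldots,x_r$, the complete $r$-partite graph $K_{x_1,x_2,\ldots,x_r}$ satisfies $$\rho(K_{x_1,x_2,\ldots,x_r})=\sum_{i=1}^r \frac{x_i(x_i + 1)}{2}.$$
   Context: All graphs are finite and simple. $K_{x_1,\ldots,x_r}$ is the complete $r$-partite graph with parts of sizes $x_1,\ldots,x_r$. A coloring means a proper vertex coloring; an induced subgraph is rainbow if all its vertices have pairwise different colors. For a graph $H$, $\rho(H)$ is the least number $m$ such that there exists a graph $G$ on $m$ vertices such that every proper vertex coloring of $G$ contains a rainbow induced subgraph isomorphic to $H$. *)

theory Defs
  imports Main
begin

definition simple_graph :: "'a set \<Rightarrow> ('a \<Rightarrow> 'a \<Rightarrow> bool) \<Rightarrow> bool" where
  "simple_graph V E \<longleftrightarrow> finite V \<and>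
     (\<forall>u v. E u v \<longrightarrow> u \<in> V \<and> v \<in> V \<and> u \<noteq> v \<and> E v u)"

definition proper_coloring :: "'a set \<Rightarrow> ('a \<Rightarrow> 'a \<Rightarrow> bool) \<Rightarrow> ('a \<Rightarrow> nat) \<Rightarrow> bool" where
  "proper_coloring V E c \<longleftrightarrow> (\<forall>u\<in>V. \<forall>v\<in>V. E u v \<longrightarrow> c u \<noteq> c v)"

definition has_rainbow_induced_copy ::
  "'b set \<Rightarrow> ('b \<Rightarrow> 'b \<Rightarrow> bool) \<Rightarrow> 'a set \<Rightarrow> ('a \<Rightarrow> 'a \<Rightarrow> bool) \<Rightarrow> ('a \<Rightarrow> nat) \<Rightarrow> bool" where
  "has_rainbow_induced_copy VH EH V E c \<longleftrightarrow>
     (\<exists>f. inj_on f VH \<and> f ` VH \<subseteq> V \<and>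
          (\<forall>u\<in>VH. \<forall>v\<in>VH. EH u v \<longleftrightarrow> E (f u) (f v)) \<and>
          inj_on (c \<circ> f) VH)"

text \<open>rho(H): least m such that some graph on m vertices (w.l.o.g. on {0..<m})
  has a rainbow induced copy of H in every proper colouring.\<close>
definition rho :: "'b set \<Rightarrow> ('b \<Rightarrow> 'b \<Rightarrow> bool) \<Rightarrow> nat" where
  "rho VH EH = (LEAST m. \<exists>E :: nat \<Rightarrow> nat \<Rightarrow> bool. simple_graph {0..<m} E \<and>
      (\<forall>c. proper_coloring {0..<m} E c \<longrightarrow> has_rainbow_induced_copy VH EH {0..<m} E c))"

text \<open>Complete r-partite graph K_{x_0,...,x_{r-1}}: vertices (i,j) with i<r, j<x i;
  two vertices adjacent iff they lie in different parts.\<close>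
definition cmp_vertices :: "nat \<Rightarrow> (nat \<Rightarrow> nat) \<Rightarrow> (nat \<times> nat) set" where
  "cmp_vertices r x = {(i, j). i < r \<and> j < x i}"

definition cmp_edges :: "nat \<Rightarrow> (nat \<Rightarrow> nat) \<Rightarrow> nat \<times> nat \<Rightarrow> nat \<times> nat \<Rightarrow> bool" where
  "cmp_edges r x u v \<longleftrightarrow> u \<in> cmp_vertices r x \<and> v \<in> cmp_vertices r x \<and> fst u \<noteq> fst v"

end

theory Submission
  imports Defs
begin

text \<open>Upper bound: for each part \<open>i\<close> and each \<open>s < x i\<close> take a clique of size \<open>s + 1\<close>,
  cliques of one part pairwise non-adjacent and different parts completely joined. In a proper
  colouring, choosing greedily one vertex per clique of part \<open>i\<close> (the \<open>s\<close>-th clique still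
  offers a colour not used by the \<open>s\<close> earlier choices) yields a rainbow copy.

  Lower bound: colour a forcing graph greedily, each colour class being a maximum independent
  set of the vertices not yet coloured. A rainbow copy maps part \<open>i\<close> to an independent set
  with colours \<open>k\<^sub>1 > \<dots> > k\<^sub>n\<close>, \<open>n = x i\<close>; its vertices of colour \<open>\<ge> k\<^sub>j\<close> form an independent set
  of size \<open>j\<close> among colours \<open>\<ge> k\<^sub>j\<close>, so class \<open>k\<^sub>j\<close> has at least \<open>j\<close> vertices. The parts
  use disjoint colour sets, so summing gives \<open>\<Sum>\<^sub>i x\<^sub>i(x\<^sub>i+1)/2\<close> distinct vertices.\<close>

lemma sum_card_greater_or_equal:
  fixes B :: "'a::linorder set"
  assumes "finite B"
  shows "(\<Sum>k\<in>B. card {k'\<in>B. k \<le> k'}) = card B * (card B + 1) div 2"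
  using assms
proof (induction B rule: finite_linorder_min_induct)
  case empty
  show ?case by simp
next
  case (insert b A)
  have "b \<notin> A" using insert.hyps(2) by blast
  have "{k'\<in>insert b A. b \<le> k'} = insert b A"
    using insert.hyps(2) by force
  moreover have "{k'\<in>insert b A. k \<le> k'} = {k'\<in>A. k \<le> k'}" if "k \<in> A" for k
    using insert.hyps(2) that by force
  ultimately have "(\<Sum>k\<in>insert b A. card {k'\<in>insert b A. k \<le> k'})
      = Suc (card A) + (\<Sum>k\<in>A. card {k'\<in>A. k \<le> k'})"
    using insert.hyps(1) \<open>b \<notin> A\<close> by simp
  then show ?case
    using insert.IH insert.hyps(1) \<open>b \<notin> A\<close> by simp
qed

lemma exists_rainbow_transversal:
  fixes P :: "nat \<Rightarrow> 'a set" and c :: "'a \<Rightarrow> 'b"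
  assumes "\<forall>s<n. finite (P s) \<and> s < card (c ` P s)"
  shows "\<exists>g. (\<forall>s<n. g s \<in> P s) \<and> inj_on (c \<circ> g) {..<n}"
  using assms
proof (induction n)
  case 0
  show ?case by simp
next
  case (Suc n)
  then obtain g where g: "\<forall>s<n. g s \<in> P s" "inj_on (c \<circ> g) {..<n}"
    by (meson less_SucI)
  have "card ((c \<circ> g) ` {..<n}) < card (c ` P n)"
    using card_image_le[of "{..<n}" "c \<circ> g"] Suc.prems by force
  then have "\<not> c ` P n \<subseteq> (c \<circ> g) ` {..<n}"
    by (meson card_mono finite_imageI finite_lessThan leD)
  then obtain y where y: "y \<in> P n" "c y \<notin> (c \<circ> g) ` {..<n}"
    by auto
  have "\<forall>s<Suc n. (g(n := y)) s \<in> P s"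
    using g(1) y(1) by (simp add: less_Suc_eq)
  moreover have "inj_on (c \<circ> g(n := y)) {..<Suc n}"
    using g(2) y(2) by (force simp: lessThan_Suc inj_on_def)
  ultimately show ?case by blast
qed

section \<open>Greedy colourings\<close>

definition independent_set :: "('a \<Rightarrow> 'a \<Rightarrow> bool) \<Rightarrow> 'a set \<Rightarrow> bool" where
  "independent_set E A \<longleftrightarrow> (\<forall>u\<in>A. \<forall>v\<in>A. \<not> E u v)"

definition greedy_colouring :: "'a set \<Rightarrow> ('a \<Rightarrow> 'a \<Rightarrow> bool) \<Rightarrow> ('a \<Rightarrow> nat) \<Rightarrow> bool" where
  "greedy_colouring W E c \<longleftrightarrow> proper_coloring W E c \<and>
     (\<forall>k A. A \<subseteq> {u\<in>W. k \<le> c u} \<and> independent_set E A \<longrightarrow> card A \<le> card {u\<in>W. c u = k})"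

lemma exists_maximum_independent_set:
  assumes "finite W"
  obtains I where "I \<subseteq> W" "independent_set E I"
    "\<And>A. A \<subseteq> W \<Longrightarrow> independent_set E A \<Longrightarrow> card A \<le> card I"
proof -
  have "\<forall>A. A \<subseteq> W \<and> independent_set E A \<longrightarrow> card A < Suc (card W)"
    using assms by (simp add: card_mono le_imp_less_Suc)
  moreover have "{} \<subseteq> W \<and> independent_set E {}"
    by (simp add: independent_set_def)
  ultimately have "\<exists>I. (I \<subseteq> W \<and> independent_set E I) \<and>
      (\<forall>A. A \<subseteq> W \<and> independent_set E A \<longrightarrow> card A \<le> card I)"
    by (rule Lattices_Big.ex_has_greatest_nat[rotated])
  then show ?thesis
    using that by blast
qed

lemma greedy_colouring_add_class:
  assumes "I \<subseteq> W" and "independent_set E I"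
    and I_max: "\<And>A. A \<subseteq> W \<Longrightarrow> independent_set E A \<Longrightarrow> card A \<le> card I"
    and c: "greedy_colouring (W - I) E c"
  shows "greedy_colouring W E (\<lambda>u. if u \<in> I then 0 else Suc (c u))"
    (is "greedy_colouring W E ?c")
proof -
  have "proper_coloring W E ?c"
    using c \<open>independent_set E I\<close>
    by (auto simp: greedy_colouring_def proper_coloring_def independent_set_def)
  moreover have "card A \<le> card {u\<in>W. ?c u = k}"
    if A: "A \<subseteq> {u\<in>W. k \<le> ?c u}" "independent_set E A" for k A
  proof (cases k)
    case 0
    have "card A \<le> card I"
      using A by (intro I_max) auto
    also have "I = {u\<in>W. ?c u = k}"
      using \<open>I \<subseteq> W\<close> 0 by auto
    finally show ?thesis .
  next
    case (Suc k')
    have "A \<subseteq> {u\<in>W - I. k' \<le> c u}"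
      using A(1) Suc by (auto split: if_splits)
    then have "card A \<le> card {u\<in>W - I. c u = k'}"
      using c A(2) by (auto simp: greedy_colouring_def)
    also have "{u\<in>W - I. c u = k'} = {u\<in>W. ?c u = k}"
      using Suc by auto
    finally show ?thesis .
  qed
  ultimately show ?thesis
    by (auto simp: greedy_colouring_def)
qed

lemma exists_greedy_colouring:
  assumes "finite W" and irreflexive: "\<And>u. \<not> E u u"
  shows "\<exists>c. greedy_colouring W E c"
  using \<open>finite W\<close>
proof (induction W rule: finite_psubset_induct)
  case (psubset W)
  show ?case
  proof (cases "W = {}")
    case True
    then show ?thesis
      by (auto simp: greedy_colouring_def proper_coloring_def)
  next
    case False
    then obtain w where "w \<in> W" by blast
    obtain I where I: "I \<subseteq> W" "independent_set E I"
      "\<And>A. A \<subseteq> W \<Longrightarrow> independent_set E A \<Longrightarrow> card A \<le> card I"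
      using exists_maximum_independent_set[OF psubset.hyps] by blast
    have "card {w} \<le> card I"
      using \<open>w \<in> W\<close> irreflexive by (intro I(3)) (auto simp: independent_set_def)
    then have "I \<noteq> {}"
      by auto
    then have "W - I \<subset> W"
      using I(1) by blast
    then obtain c where "greedy_colouring (W - I) E c"
      using psubset.IH by blast
    then show ?thesis
      using greedy_colouring_add_class[OF I] by blast
  qed
qed

section \<open>The lower bound\<close>

lemma triangular_le_sum_colour_classes:
  assumes "finite W" and c: "greedy_colouring W E c"
    and A: "A \<subseteq> W" "independent_set E A" "inj_on c A"
  shows "card A * (card A + 1) div 2 \<le> (\<Sum>k\<in>c ` A. card {u\<in>W. c u = k})"
proof -
  have fin: "finite A"
    using A(1) \<open>finite W\<close> by (rule finite_subset)
  have "card A * (card A + 1) div 2 = (\<Sum>k\<in>c ` A. card {k'\<in>c ` A. k \<le> k'})"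
    using sum_card_greater_or_equal[of "c ` A"] fin card_image[OF A(3)] by simp
  also have "\<dots> \<le> (\<Sum>k\<in>c ` A. card {u\<in>W. c u = k})"
  proof (rule sum_mono)
    fix k
    have "{k'\<in>c ` A. k \<le> k'} = c ` {u\<in>A. k \<le> c u}"
      by auto
    then have "card {k'\<in>c ` A. k \<le> k'} = card {u\<in>A. k \<le> c u}"
      using card_image[OF inj_on_subset[OF A(3)]] by simp
    also have "\<dots> \<le> card {u\<in>W. c u = k}"
    proof -
      have "{u\<in>A. k \<le> c u} \<subseteq> {u\<in>W. k \<le> c u} \<and> independent_set E {u\<in>A. k \<le> c u}"
        using A(1,2) by (auto simp: independent_set_def)
      then show ?thesis
        using c by (simp add: greedy_colouring_def)
    qed
    finally show "card {k'\<in>c ` A. k \<le> k'} \<le> card {u\<in>W. c u = k}" .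
  qed
  finally show ?thesis .
qed

lemma sum_triangular_le_card:
  fixes r :: nat
  assumes "finite W" and c: "greedy_colouring W E c"
    and A: "\<And>i. i < r \<Longrightarrow> A i \<subseteq> W \<and> independent_set E (A i) \<and> inj_on c (A i)"
    and disjoint: "\<And>i j. i < r \<Longrightarrow> j < r \<Longrightarrow> i \<noteq> j \<Longrightarrow> c ` A i \<inter> c ` A j = {}"
  shows "(\<Sum>i<r. card (A i) * (card (A i) + 1) div 2) \<le> card W"
proof -
  have fin: "finite (c ` A i)" if "i < r" for i
    using A[OF that] \<open>finite W\<close> finite_subset by blast
  have "(\<Sum>i<r. card (A i) * (card (A i) + 1) div 2)
      \<le> (\<Sum>i<r. \<Sum>k\<in>c ` A i. card {u\<in>W. c u = k})"
    using triangular_le_sum_colour_classes[OF \<open>finite W\<close> c] A by (intro sum_mono) blast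
  also have "\<dots> = (\<Sum>k\<in>(\<Union>i<r. c ` A i). card {u\<in>W. c u = k})"
    by (rule sum.UNION_disjoint[symmetric]) (use fin disjoint in auto)
  also have "\<dots> = card (\<Union>k\<in>(\<Union>i<r. c ` A i). {u\<in>W. c u = k})"
    using fin \<open>finite W\<close> by (intro card_UN_disjoint[symmetric]) auto
  also have "\<dots> \<le> card W"
    using \<open>finite W\<close> by (intro card_mono) auto
  finally show ?thesis .
qed

lemma rainbow_complete_multipartite_le_card:
  assumes "finite W" and c: "greedy_colouring W E c"
    and "has_rainbow_induced_copy (cmp_vertices r x) (cmp_edges r x) W E c"
  shows "(\<Sum>i<r. x i * (x i + 1) div 2) \<le> card W"
proof -
  obtain f where f_inj: "inj_on f (cmp_vertices r x)" and f_into: "f ` cmp_vertices r x \<subseteq> W"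
    and f_edges: "\<forall>u\<in>cmp_vertices r x. \<forall>v\<in>cmp_vertices r x. cmp_edges r x u v \<longleftrightarrow> E (f u) (f v)"
    and f_rainbow: "inj_on (c \<circ> f) (cmp_vertices r x)"
    using assms(3) unfolding has_rainbow_induced_copy_def by blast
  define part where "part i = {i} \<times> {..<x i}" for i
  have part_sub: "part i \<subseteq> cmp_vertices r x" if "i < r" for i
    using that by (auto simp: part_def cmp_vertices_def)
  have "(\<Sum>i<r. card (f ` part i) * (card (f ` part i) + 1) div 2) \<le> card W"
  proof (rule sum_triangular_le_card[OF \<open>finite W\<close> c])
    fix i assume i: "i < r"
    have "\<not> E (f u) (f v)" if "u \<in> part i" "v \<in> part i" for u v
    proof -
      have "u \<in> cmp_vertices r x" "v \<in> cmp_vertices r x" "fst u = fst v"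
        using that part_sub[OF i] by (auto simp: part_def)
      then show ?thesis
        using f_edges[rule_format, of u v] by (simp add: cmp_edges_def)
    qed
    then have "independent_set E (f ` part i)"
      by (auto simp: independent_set_def)
    moreover have "inj_on c (f ` part i)"
      using inj_on_subset[OF f_rainbow part_sub[OF i]] by (rule inj_on_imageI)
    ultimately show "f ` part i \<subseteq> W \<and> independent_set E (f ` part i) \<and> inj_on c (f ` part i)"
      using f_into part_sub[OF i] by blast
  next
    fix i j assume "i < r" "j < r" "i \<noteq> j"
    have "c (f u) \<noteq> c (f v)" if "u \<in> part i" "v \<in> part j" for u v
    proof
      assume "c (f u) = c (f v)"
      then have "u = v"
        using inj_onD[OF f_rainbow] that part_sub \<open>i < r\<close> \<open>j < r\<close> by (metis comp_apply subsetD)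
      then show False
        using that \<open>i \<noteq> j\<close> by (auto simp: part_def)
    qed
    then show "c ` f ` part i \<inter> c ` f ` part j = {}"
      by blast
  qed
  moreover have "card (f ` part i) = x i" if "i < r" for i
    using card_image[OF inj_on_subset[OF f_inj part_sub[OF that]]] by (simp add: part_def)
  ultimately show ?thesis
    by simp
qed

definition forces_rainbow_copy ::
  "'b set \<Rightarrow> ('b \<Rightarrow> 'b \<Rightarrow> bool) \<Rightarrow> 'a set \<Rightarrow> ('a \<Rightarrow> 'a \<Rightarrow> bool) \<Rightarrow> bool" where
  "forces_rainbow_copy VH EH V E \<longleftrightarrow> simple_graph V E \<and>
     (\<forall>c. proper_coloring V E c \<longrightarrow> has_rainbow_induced_copy VH EH V E c)"

lemma rho_eq_Least_forces_rainbow_copy: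
  "rho VH EH = (LEAST m. \<exists>E. forces_rainbow_copy VH EH {0..<m} E)"
  by (simp add: rho_def forces_rainbow_copy_def)

lemma forces_rainbow_copy_bij_betw:
  assumes h: "bij_betw h V' V" and forces: "forces_rainbow_copy VH EH V E"
  shows "forces_rainbow_copy VH EH V' (\<lambda>u v. u \<in> V' \<and> v \<in> V' \<and> E (h u) (h v))"
    (is "forces_rainbow_copy VH EH V' ?E'")
proof -
  define g where "g = inv_into V' h"
  have g: "bij_betw g V V'" and hg: "\<And>a. a \<in> V \<Longrightarrow> h (g a) = a"
    using h by (auto simp: g_def bij_betw_inv_into bij_betw_inv_into_right)
  have "simple_graph V' ?E'"
    using forces bij_betw_finite[OF h] by (auto simp: forces_rainbow_copy_def simple_graph_def)
  moreover have "has_rainbow_induced_copy VH EH V' ?E' c" if "proper_coloring V' ?E' c" for c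
  proof -
    have "proper_coloring V E (c \<circ> g)"
      using that bij_betwE[OF g] hg by (auto simp: proper_coloring_def)
    then obtain f where f: "inj_on f VH" "f ` VH \<subseteq> V"
      "\<forall>u\<in>VH. \<forall>v\<in>VH. EH u v \<longleftrightarrow> E (f u) (f v)" "inj_on (c \<circ> g \<circ> f) VH"
      using forces unfolding forces_rainbow_copy_def has_rainbow_induced_copy_def by blast
    have gf: "g (f u) \<in> V'" "h (g (f u)) = f u" if "u \<in> VH" for u
      using f(2) that bij_betwE[OF g] hg by auto
    have "inj_on (g \<circ> f) VH"
      using f(1,2) g by (meson bij_betw_def comp_inj_on inj_on_subset)
    then show ?thesis
      unfolding has_rainbow_induced_copy_def using f(3,4) gf
      by (intro exI[of _ "g \<circ> f"]) (auto simp: comp_assoc)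
  qed
  ultimately show ?thesis
    by (simp add: forces_rainbow_copy_def)
qed

lemma forces_rainbow_copy_initial_segment:
  assumes "forces_rainbow_copy VH EH V E"
  shows "\<exists>E'. forces_rainbow_copy VH EH {0..<card V} E'"
proof -
  have "finite V"
    using assms by (simp add: forces_rainbow_copy_def simple_graph_def)
  then obtain h where "bij_betw h {0..<card V} V"
    using ex_bij_betw_nat_finite by blast
  then show ?thesis
    using forces_rainbow_copy_bij_betw assms by blast
qed

lemma forces_rainbow_complete_multipartite_card_le:
  assumes "forces_rainbow_copy (cmp_vertices r x) (cmp_edges r x) V E"
  shows "(\<Sum>i<r. x i * (x i + 1) div 2) \<le> card V"
proof -
  have "finite V" and irreflexive: "\<And>u. \<not> E u u"
    using assms by (auto simp: forces_rainbow_copy_def simple_graph_def)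
  then obtain c where c: "greedy_colouring V E c"
    using exists_greedy_colouring by blast
  then have "has_rainbow_induced_copy (cmp_vertices r x) (cmp_edges r x) V E c"
    using assms by (simp add: forces_rainbow_copy_def greedy_colouring_def)
  then show ?thesis
    using rainbow_complete_multipartite_le_card[OF \<open>finite V\<close> c] by blast
qed

section \<open>The upper bound\<close>

text \<open>Vertex \<open>(i, s, t)\<close> is the \<open>t\<close>-th vertex of the clique of size \<open>s + 1\<close> in part \<open>i\<close>.\<close>
definition stair_vertices :: "nat \<Rightarrow> (nat \<Rightarrow> nat) \<Rightarrow> (nat \<times> nat \<times> nat) set" where
  "stair_vertices r x = (SIGMA i:{..<r}. SIGMA s:{..<x i}. {..s})"

definition stair_edges ::
  "nat \<Rightarrow> (nat \<Rightarrow> nat) \<Rightarrow> nat \<times> nat \<times> nat \<Rightarrow> nat \<times> nat \<times> nat \<Rightarrow> bool" where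
  "stair_edges r x u v \<longleftrightarrow> u \<in> stair_vertices r x \<and> v \<in> stair_vertices r x \<and>
     (fst u \<noteq> fst v \<or> (fst (snd u) = fst (snd v) \<and> snd (snd u) \<noteq> snd (snd v)))"

lemma mem_stair_vertices [simp]:
  "(i, s, t) \<in> stair_vertices r x \<longleftrightarrow> i < r \<and> s < x i \<and> t \<le> s"
  by (auto simp: stair_vertices_def)

lemma card_stair_vertices: "card (stair_vertices r x) = (\<Sum>i<r. x i * (x i + 1) div 2)"
proof -
  have "(\<Sum>s<n. Suc s) = n * (n + 1) div 2" for n :: nat
    by (induction n) auto
  then show ?thesis
    by (simp add: stair_vertices_def)
qed

lemma simple_graph_stair: "simple_graph (stair_vertices r x) (stair_edges r x)"
  by (auto simp: simple_graph_def stair_edges_def stair_vertices_def)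

lemma card_colours_stair_clique:
  assumes "proper_coloring (stair_vertices r x) (stair_edges r x) c" and "i < r" "s < x i"
  shows "card (c ` (\<lambda>t. (i, s, t)) ` {..s}) = Suc s"
proof -
  have "inj_on (c \<circ> (\<lambda>t. (i, s, t))) {..s}"
  proof (rule inj_onI)
    fix t t' assume "t \<in> {..s}" "t' \<in> {..s}" "(c \<circ> (\<lambda>t. (i, s, t))) t = (c \<circ> (\<lambda>t. (i, s, t))) t'"
    then show "t = t'"
      using assms(1)[unfolded proper_coloring_def, rule_format, of "(i, s, t)" "(i, s, t')"] assms(2,3)
      by (auto simp: stair_edges_def)
  qed
  then have "card ((c \<circ> (\<lambda>t. (i, s, t))) ` {..s}) = Suc s"
    by (subst card_image) auto
  then show ?thesis
    by (simp add: image_comp)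
qed

lemma stair_section_embedding:
  assumes f: "\<And>i j. i < r \<Longrightarrow> j < x i \<Longrightarrow> \<exists>t\<le>j. f (i, j) = (i, j, t)"
  shows "inj_on f (cmp_vertices r x)"
    and "f ` cmp_vertices r x \<subseteq> stair_vertices r x"
    and "\<forall>u\<in>cmp_vertices r x. \<forall>v\<in>cmp_vertices r x.
           cmp_edges r x u v \<longleftrightarrow> stair_edges r x (f u) (f v)"
proof -
  show "inj_on f (cmp_vertices r x)"
    by (rule inj_onI) (auto simp: cmp_vertices_def dest!: f)
  show "f ` cmp_vertices r x \<subseteq> stair_vertices r x"
  proof
    fix y assume "y \<in> f ` cmp_vertices r x"
    then obtain i j where "i < r" "j < x i" "y = f (i, j)"
      by (auto simp: cmp_vertices_def)
    then show "y \<in> stair_vertices r x"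
      using f[of i j] by auto
  qed
  show "\<forall>u\<in>cmp_vertices r x. \<forall>v\<in>cmp_vertices r x.
           cmp_edges r x u v \<longleftrightarrow> stair_edges r x (f u) (f v)"
  proof (intro ballI)
    fix u v assume "u \<in> cmp_vertices r x" "v \<in> cmp_vertices r x"
    then obtain i j i' j' where "u = (i, j)" "v = (i', j')" "i < r" "j < x i" "i' < r" "j' < x i'"
      by (auto simp: cmp_vertices_def)
    then show "cmp_edges r x u v \<longleftrightarrow> stair_edges r x (f u) (f v)"
      using f[of i j] f[of i' j'] by (auto simp: cmp_edges_def cmp_vertices_def stair_edges_def)
  qed
qed

lemma stair_forces_rainbow_copy:
  "forces_rainbow_copy (cmp_vertices r x) (cmp_edges r x) (stair_vertices r x) (stair_edges r x)"
  unfolding forces_rainbow_copy_def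
proof (intro conjI allI impI simple_graph_stair)
  fix c assume c: "proper_coloring (stair_vertices r x) (stair_edges r x) c"
  have "\<exists>g. (\<forall>j<x i. g j \<in> (\<lambda>t. (i, j, t)) ` {..j}) \<and> inj_on (c \<circ> g) {..<x i}" if "i < r" for i
    using card_colours_stair_clique[OF c that] by (intro exists_rainbow_transversal) simp
  then obtain G where G: "\<And>i. i < r \<Longrightarrow>
      (\<forall>j<x i. G i j \<in> (\<lambda>t. (i, j, t)) ` {..j}) \<and> inj_on (c \<circ> G i) {..<x i}"
    by metis
  define f where "f u = G (fst u) (snd u)" for u
  have f: "\<exists>t\<le>j. f (i, j) = (i, j, t)" if "i < r" "j < x i" for i j
    using G that by (force simp: f_def)
  note embedding = stair_section_embedding[of r x f, OF f]
  have "inj_on (c \<circ> f) (cmp_vertices r x)"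
  proof (rule inj_onI)
    fix u v assume u: "u \<in> cmp_vertices r x" and v: "v \<in> cmp_vertices r x"
      and eq: "(c \<circ> f) u = (c \<circ> f) v"
    show "u = v"
    proof (cases "fst u = fst v")
      case True
      then show ?thesis
        using G inj_onD eq u v by (fastforce simp: cmp_vertices_def f_def)
    next
      case False
      then have "stair_edges r x (f u) (f v)"
        using embedding(3) u v by (simp add: cmp_edges_def)
      then show ?thesis
        using c eq embedding(2) u v by (auto simp: proper_coloring_def)
    qed
  qed
  then show "has_rainbow_induced_copy (cmp_vertices r x) (cmp_edges r x)
      (stair_vertices r x) (stair_edges r x) c"
    unfolding has_rainbow_induced_copy_def using embedding by blast
qed

theorem corollary2p3:
  fixes r :: nat and x :: "nat \<Rightarrow> nat"
  assumes "\<forall>i<r. 0 < x i"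
  shows "rho (cmp_vertices r x) (cmp_edges r x) = (\<Sum>i<r. x i * (x i + 1) div 2)"
  unfolding rho_eq_Least_forces_rainbow_copy
proof (rule Least_equality)
  show "\<exists>E. forces_rainbow_copy (cmp_vertices r x) (cmp_edges r x)
      {0..<(\<Sum>i<r. x i * (x i + 1) div 2)} E"
    using forces_rainbow_copy_initial_segment[OF stair_forces_rainbow_copy]
    by (simp add: card_stair_vertices)
next
  fix m :: nat assume "\<exists>E. forces_rainbow_copy (cmp_vertices r x) (cmp_edges r x) {0..<m} E"
  then show "(\<Sum>i<r. x i * (x i + 1) div 2) \<le> m"
    using forces_rainbow_complete_multipartite_card_le by fastforce
qed

end
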